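(* Let $m>0$ be an even integer and suppose that $s=(s_A,s_B)$ is a classical deterministic winning strategy for the matching game with parameter $m$. Then there is a set $R$ of bit strings of length $m$ such that the following hold simultaneously: (1) $|R|\ge \dfrac{2^m}{2^{\lceil\log_2 m\rceil}}$; (2) the graph $G_s$ contains a connected component with more than $\frac{m}{2}$ vertices; (3) for each $\{i,j\}\in E_s$, the value $r_i\oplus r_j$ is the same for every $r\in R$.
   Context: A perfect matching on $\{0,\ldots,m-1\}$ ($m$ even) is a partition of this set into $m/2$ sets of cardinality 2; $M_m$ denotes the set of all perfect matchings. Let $L=\lceil\log_2 m\rceil$. For $n\in\{0,\ldots,m-1\}$, $\bar n\in\{0,1\}^L$ is the $L$-bit binary representation of $n$, most significant bit first. On bit strings $\oplus$ is bitwise, and $u\cdot v=\bigoplus_i(u_i\wedge v_i)$. The matching game with parameter $m$: Alice receives $x\in\{0,1\}^m$ and outputs $a\in\{0,1\}^L$; Bob receives $y\in M_m$ and outputs a two-element set $\{b_1,b_2\}\subseteq\{0,\ldots,m-1\}$ and a string $b\in\{0,1\}^L$; they win on question $(x,y)$ iff $\{b_1,b_2\}\in y$ and $x_{b_1}\oplus x_{b_2}=(\bar b_1\oplus\bar b_2)\cdot(a\oplus b)$. A classical deterministic strategy is a pair of functions $s_A:\{0,1\}^m\to\{0,1\}^L$ and $s_B:M_m\to\{\text{two-element subsets of }\{0,\ldots,m-1\}\}\times\{0,1\}^L$; it is winning if $(s_A(x),s_B(y))$ wins on every question $(x,y)\in\{0,1\}^m\times M_m$. For such $s$, $G_s=(V,E_s)$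 is the graph with vertex set $V=\{0,1,\ldots,m-1\}$ whose edge set $E_s$ consists of all two-element sets $\{i,j\}$ that Bob outputs (as the first component of $s_B(y)$) for at least one input $y\in M_m$. A connected component of a graph is a nonempty maximal connected induced subgraph; its cardinality is its number of vertices. *)

theory Defs
  imports Main "HOL-Library.Log_Nat" Complex_Main
begin

definition Lm :: "nat \<Rightarrow> nat" where
  "Lm m = nat \<lceil>log 2 (real m)\<rceil>"

definition bin :: "nat \<Rightarrow> nat \<Rightarrow> bool list" where
  "bin L n = map (\<lambda>k. bit n (L - 1 - k)) [0..<L]"

definition xorv :: "bool list \<Rightarrow> bool list \<Rightarrow> bool list" where
  "xorv u v = map2 (\<noteq>) u v"

definition dotv :: "bool list \<Rightarrow> bool list \<Rightarrow> bool" where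
  "dotv u v = foldr (\<noteq>) (map2 (\<and>) u v) False"

definition perfect_matchings :: "nat \<Rightarrow> nat set set set" where
  "perfect_matchings m = {y. (\<forall>e\<in>y. e \<subseteq> {0..<m} \<and> card e = 2) \<and>
                              (\<forall>i<m. \<exists>!e. e \<in> y \<and> i \<in> e)}"

definition wins :: "nat \<Rightarrow> bool list \<Rightarrow> bool list \<Rightarrow> nat set set \<Rightarrow> nat set \<Rightarrow> bool list \<Rightarrow> bool" where
  "wins m x a y e b \<longleftrightarrow> e \<in> y \<and>
     (\<exists>b1 b2. e = {b1, b2} \<and> b1 \<noteq> b2 \<and>
        ((x ! b1 \<noteq> x ! b2) = dotv (xorv (bin (Lm m) b1) (bin (Lm m) b2)) (xorv a b)))"

definition winning_strategy :: "nat \<Rightarrow> (bool list \<Rightarrow> bool list) \<Rightarrow> (nat set set \<Rightarrow> nat set \<times> bool list) \<Rightarrow> bool" where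
  "winning_strategy m sA sB \<longleftrightarrow>
     (\<forall>x. length x = m \<longrightarrow> length (sA x) = Lm m) \<and>
     (\<forall>y\<in>perfect_matchings m. card (fst (sB y)) = 2 \<and> fst (sB y) \<subseteq> {0..<m}
                                \<and> length (snd (sB y)) = Lm m) \<and>
     (\<forall>x y. length x = m \<longrightarrow> y \<in> perfect_matchings m \<longrightarrow>
        wins m x (sA x) y (fst (sB y)) (snd (sB y)))"

definition edges_s :: "nat \<Rightarrow> (nat set set \<Rightarrow> nat set \<times> bool list) \<Rightarrow> nat set set" where
  "edges_s m sB = (\<lambda>y. fst (sB y)) ` perfect_matchings m"

definition component :: "nat \<Rightarrow> nat set set \<Rightarrow> nat \<Rightarrow> nat set" where
  "component m E v = {u. u < m \<and> (v, u) \<in> {(i, j). {i, j} \<in> E}\<^sup>*}"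

end

theory Submission
  imports Defs "HOL-Library.FuncSet"
begin

(* By pigeonhole, Alice's answer is constant on a set R of at least 2^m / 2^L inputs; on R the
   winning condition makes r_i \<oplus> r_j a function of Bob's answer alone for every edge {i, j} he
   can output. Bob must answer with an edge of the matching he receives, so E_s meets every
   perfect matching. If all components had at most m/2 vertices, listing the vertices sorted by
   component and pairing the k-th with the (k + m/2)-th would give a perfect matching whose pairs
   all join different components. *)

lemma component_subset: "component m E v \<subseteq> {0..<m}"
  by (auto simp: component_def)

lemma finite_component: "finite (component m E v)"
  by (rule finite_subset[OF component_subset]) simp

lemma mem_component_self: "v < m \<Longrightarrow> v \<in> component m E v"
  by (simp add: component_def)

lemma mem_componentI: "{v, w} \<in> E \<Longrightarrow> w < m \<Longrightarrow> w \<in> component m E v"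
  by (auto simp: component_def)

lemma component_eq:
  assumes "w \<in> component m E v"
  shows "component m E w = component m E v"
proof -
  let ?r = "{(i, j). {i, j} \<in> E}"
  have "sym (?r\<^sup>*)"
    by (intro sym_rtrancl) (auto simp: sym_def insert_commute)
  moreover have "(v, w) \<in> ?r\<^sup>*"
    using assms by (simp add: component_def)
  ultimately have "(w, v) \<in> ?r\<^sup>*"
    by (rule symD)
  with \<open>(v, w) \<in> ?r\<^sup>*\<close> show ?thesis
    unfolding component_def by (auto intro: rtrancl_trans)
qed

lemma Min_component_in: "v < m \<Longrightarrow> Min (component m E v) \<in> component m E v"
  by (rule Min_in[OF finite_component]) (use mem_component_self in blast)

lemma mem_component_if_Min_eq:
  assumes "v < m" "w < m" "Min (component m E v) = Min (component m E w)"
  shows "w \<in> component m E v"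
proof -
  have "component m E v = component m E (Min (component m E v))"
    using component_eq[OF Min_component_in[OF assms(1)]] by simp
  also have "\<dots> = component m E w"
    using component_eq[OF Min_component_in[OF assms(2)]] assms(3) by simp
  finally show ?thesis
    using mem_component_self[OF assms(2)] by simp
qed

lemma mem_component_if_sorted_between:
  assumes sorted: "sorted (map (\<lambda>v. Min (component m E v)) xs)"
    and "set xs \<subseteq> {0..<m}" "a \<le> t" "t \<le> b" "b < length xs"
    and "xs ! b \<in> component m E (xs ! a)"
  shows "xs ! t \<in> component m E (xs ! a)"
proof (rule mem_component_if_Min_eq)
  let ?c = "\<lambda>v. Min (component m E v)"
  have "xs ! i < m" if "i < length xs" for i
    using assms(2) nth_mem[OF that] by auto
  then show "xs ! a < m" "xs ! t < m"
    using assms(3-5) by simp_all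
  have "?c (xs ! b) = ?c (xs ! a)"
    using component_eq[OF assms(6)] by simp
  moreover have "?c (xs ! a) \<le> ?c (xs ! t)" "?c (xs ! t) \<le> ?c (xs ! b)"
    using sorted_nth_mono[OF sorted, of a t] sorted_nth_mono[OF sorted, of t b] assms(3-5)
    by simp_all
  ultimately show "?c (xs ! a) = ?c (xs ! t)"
    by simp
qed

lemma half_shift_matching:
  assumes "distinct xs" "set xs = {0..<2 * h}"
  shows "(\<lambda>k. {xs ! k, xs ! (k + h)}) ` {..<h} \<in> perfect_matchings (2 * h)"
proof -
  have len: "length xs = 2 * h"
    using assms distinct_card by fastforce
  have nth_inj: "xs ! i = xs ! j \<longleftrightarrow> i = j" if "i < 2 * h" "j < 2 * h" for i j
    using nth_eq_iff_index_eq[OF assms(1)] len that by simp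
  have nth_below: "xs ! i < 2 * h" if "i < 2 * h" for i
    using nth_mem[of i xs] assms(2) len that by simp
  show ?thesis
    unfolding perfect_matchings_def
  proof (intro CollectI conjI ballI allI impI)
    fix e assume "e \<in> (\<lambda>k. {xs ! k, xs ! (k + h)}) ` {..<h}"
    then obtain k where "k < h" "e = {xs ! k, xs ! (k + h)}"
      by blast
    then show "e \<subseteq> {0..<2 * h}" "card e = 2"
      using nth_below nth_inj by auto
  next
    fix i assume "i < 2 * h"
    then obtain p where p: "p < 2 * h" "xs ! p = i"
      using assms(2) len by (metis atLeastLessThan_iff in_set_conv_nth zero_le)
    define k where "k = (if p < h then p else p - h)"
    have k: "k < h" "p = k \<or> p = k + h"
      using p by (auto simp: k_def)
    show "\<exists>!e. e \<in> (\<lambda>k. {xs ! k, xs ! (k + h)}) ` {..<h} \<and> i \<in> e"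
    proof (rule ex1I)
      show "{xs ! k, xs ! (k + h)} \<in> (\<lambda>k. {xs ! k, xs ! (k + h)}) ` {..<h} \<and> i \<in> {xs ! k, xs ! (k + h)}"
        using k p by auto
    next
      fix e assume e: "e \<in> (\<lambda>k. {xs ! k, xs ! (k + h)}) ` {..<h} \<and> i \<in> e"
      then obtain k' where k': "k' < h" "e = {xs ! k', xs ! (k' + h)}"
        by blast
      then have "p = k' \<or> p = k' + h"
        using e p nth_inj by auto
      with k k' show "e = {xs ! k, xs ! (k + h)}"
        by auto
    qed
  qed
qed

lemma large_component_if_meets_all_perfect_matchings:
  assumes "even m" and meets: "\<And>y. y \<in> perfect_matchings m \<Longrightarrow> \<exists>e\<in>y. e \<in> E"
  shows "\<exists>v<m. m < 2 * card (component m E v)"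
proof -
  define h where "h = m div 2"
  have m: "m = 2 * h"
    using \<open>even m\<close> by (simp add: h_def)
  \<comment> \<open>components occupy contiguous blocks of \<open>xs\<close>\<close>
  define xs where "xs = sort_key (\<lambda>v. Min (component m E v)) [0..<m]"
  have xs: "distinct xs" "set xs = {0..<m}" "length xs = m"
    "sorted (map (\<lambda>v. Min (component m E v)) xs)"
    by (simp_all add: xs_def)
  have "(\<lambda>k. {xs ! k, xs ! (k + h)}) ` {..<h} \<in> perfect_matchings m"
    using half_shift_matching[of xs h] xs m by simp
  then obtain k where k: "k < h" and edge: "{xs ! k, xs ! (k + h)} \<in> E"
    using meets by blast
  have below_m: "xs ! i < m" if "i < m" for i
    using nth_mem[of i xs] xs that by simp
  have "xs ! (k + h) \<in> component m E (xs ! k)"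
    using edge below_m k m by (intro mem_componentI) auto
  then have segment: "(!) xs ` {k..k + h} \<subseteq> component m E (xs ! k)"
    using mem_component_if_sorted_between[of m E xs k _ "k + h"] xs k m by auto
  have "inj_on ((!) xs) {k..k + h}"
    using nth_eq_iff_index_eq[OF xs(1)] xs k m by (auto simp: inj_on_def)
  then have "h + 1 = card ((!) xs ` {k..k + h})"
    by (simp add: card_image)
  also have "\<dots> \<le> card (component m E (xs ! k))"
    using segment finite_component by (rule card_mono[rotated])
  finally show ?thesis
    using below_m k m by (intro exI[of _ "xs ! k"]) auto
qed

lemma exists_large_fiber_lists:
  fixes f :: "'a::finite list \<Rightarrow> 'b::finite list"
  assumes "\<And>x. length x = m \<Longrightarrow> length (f x) = L"
  shows "\<exists>b. card (UNIV :: 'a set) ^ m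
               \<le> card {x. length x = m \<and> f x = b} * card (UNIV :: 'b set) ^ L"
proof -
  let ?A = "{x::'a list. length x = m}" and ?B = "{b::'b list. length b = L}"
  have "f \<in> ?A \<rightarrow> ?B"
    using assms by blast
  moreover have "?B \<noteq> {}"
    using length_replicate[of L undefined] by blast
  moreover have "finite ?A" "finite ?B"
    using finite_lists_length_eq[of "UNIV :: 'a set" m] finite_lists_length_eq[of "UNIV :: 'b set" L]
    by simp_all
  ultimately obtain b where "card ?A \<le> card (f -` {b} \<inter> ?A) * card ?B"
    using pigeonhole_card by blast
  moreover have "f -` {b} \<inter> ?A = {x. length x = m \<and> f x = b}"
    by blast
  ultimately show ?thesis
    using card_lists_length_eq[of "UNIV :: 'a set" m] card_lists_length_eq[of "UNIV :: 'b set" L]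
    by auto
qed

lemma xorv_commute: "xorv u v = xorv v u"
  unfolding xorv_def
proof (induction u arbitrary: v)
  case Nil
  then show ?case by simp
next
  case (Cons a u)
  then show ?case by (cases v) auto
qed

lemma winning_strategy_answer_in_matching:
  assumes "winning_strategy m sA sB" "y \<in> perfect_matchings m"
  shows "fst (sB y) \<in> y"
proof -
  have "wins m (replicate m False) (sA (replicate m False)) y (fst (sB y)) (snd (sB y))"
    using assms by (simp add: winning_strategy_def)
  then show ?thesis
    by (simp add: wins_def)
qed

lemma winning_strategy_parity:
  assumes "winning_strategy m sA sB" "length x = m" "y \<in> perfect_matchings m"
    and "fst (sB y) = {i, j}"
  shows "(x ! i \<noteq> x ! j) = dotv (xorv (bin (Lm m) i) (bin (Lm m) j)) (xorv (sA x) (snd (sB y)))"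
proof -
  have "wins m x (sA x) y (fst (sB y)) (snd (sB y))"
    using assms(1-3) by (simp add: winning_strategy_def)
  then obtain b1 b2 where b: "{b1, b2} = {i, j}"
    and parity: "(x ! b1 \<noteq> x ! b2) = dotv (xorv (bin (Lm m) b1) (bin (Lm m) b2)) (xorv (sA x) (snd (sB y)))"
    using assms(4) by (auto simp: wins_def)
  from b consider "b1 = i" "b2 = j" | "b1 = j" "b2 = i"
    by (auto simp: doubleton_eq_iff)
  then show ?thesis
    using parity xorv_commute by cases auto
qed

lemma winning_strategy_parity_eq:
  assumes "winning_strategy m sA sB" "{i, j} \<in> edges_s m sB"
    and "length r = m" "length r' = m" "sA r = sA r'"
  shows "(r ! i \<noteq> r ! j) = (r' ! i \<noteq> r' ! j)"
proof -
  from assms(2) obtain y where y: "y \<in> perfect_matchings m" "fst (sB y) = {i, j}"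
    unfolding edges_s_def by auto
  show ?thesis
    using winning_strategy_parity[OF assms(1) assms(3) y] winning_strategy_parity[OF assms(1) assms(4) y]
      assms(5)
    by simp
qed

lemma winning_strategy_large_component:
  assumes "winning_strategy m sA sB" "even m"
  shows "\<exists>v<m. m < 2 * card (component m (edges_s m sB) v)"
proof (rule large_component_if_meets_all_perfect_matchings[OF assms(2)])
  fix y assume "y \<in> perfect_matchings m"
  then show "\<exists>e\<in>y. e \<in> edges_s m sB"
    using winning_strategy_answer_in_matching[OF assms(1)] by (auto simp: edges_s_def)
qed

theorem lemma2:
  fixes m :: nat
    and sA :: "bool list \<Rightarrow> bool list"
    and sB :: "nat set set \<Rightarrow> nat set \<times> bool list"
  assumes "m > 0" and "even m"
    and "winning_strategy m sA sB"
  shows "\<exists>R :: bool list set. (\<forall>r\<in>R. length r = m) \<and>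
           real (card R) \<ge> 2 ^ m / 2 ^ Lm m \<and>
           (\<exists>v<m. real (card (component m (edges_s m sB) v)) > real m / 2) \<and>
           (\<forall>i j. {i, j} \<in> edges_s m sB \<longrightarrow>
              (\<forall>r\<in>R. \<forall>r'\<in>R. (r ! i \<noteq> r ! j) = (r' ! i \<noteq> r' ! j)))"
proof -
  have "\<And>x. length x = m \<Longrightarrow> length (sA x) = Lm m"
    using assms(3) by (simp add: winning_strategy_def)
  then obtain a where fiber: "2 ^ m \<le> card {x. length x = m \<and> sA x = a} * 2 ^ Lm m"
    using exists_large_fiber_lists[of m sA "Lm m"] by auto
  define R where "R = {x. length x = m \<and> sA x = a}"
  have "real (2 ^ m) \<le> real (card R * 2 ^ Lm m)"
    using fiber unfolding R_def by (simp only: of_nat_le_iff)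
  then have "2 ^ m / 2 ^ Lm m \<le> real (card R)"
    by (simp add: divide_le_eq)
  moreover obtain v where "v < m" "m < 2 * card (component m (edges_s m sB) v)"
    using winning_strategy_large_component[OF assms(3,2)] by blast
  then have "\<exists>v<m. real (card (component m (edges_s m sB) v)) > real m / 2"
    by (intro exI[of _ v]) linarith
  moreover have "\<forall>r\<in>R. length r = m"
    by (simp add: R_def)
  moreover have "\<forall>i j. {i, j} \<in> edges_s m sB \<longrightarrow>
      (\<forall>r\<in>R. \<forall>r'\<in>R. (r ! i \<noteq> r ! j) = (r' ! i \<noteq> r' ! j))"
    using winning_strategy_parity_eq[OF assms(3)] by (simp add: R_def)
  ultimately show ?thesis
    by blast
qed

end
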